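(* Let $G$ be a $\lambda$-graph and $Q$ a query over $G$. Then $Q^{\Downarrow}$ is a bisimulation if and only if $Q^{\#}$ is a bisimulation.
   Context: A pre-$\lambda$-graph is a directed graph whose nodes are of four kinds: an application node $@(n_1,n_2)$ has exactly two children, its left child $n_1$ and its right child $n_2$; an abstraction node $\lambda(n)$ has exactly one child, its body $n$; a free variable node has no children and carries an atom $\mathrm{id}(n)$ from a fixed set of atoms, distinct free variable nodes carrying distinct atoms; a bound variable node $\mathrm{var}(l)$ has exactly one outgoing binding edge, to an abstraction node $l$ (its binder). A trace is a finite sequence of directions from $\{\swarrow,\downarrow,\searrow\}$; $\epsilon$ is the empty trace and $d\cdot\tau$ is the trace $\tau$ extended by one final step $d$. Paths $n\xrightarrow{\tau}m$ are defined inductively: $n\xrightarrow{\epsilon}n$; if $n\xrightarrow{\tau}\lambda(m)$ then $n\xrightarrow{\downarrow\cdot\tau}m$; if $n\xrightarrow{\tau}@(m_1,m_2)$ then $n\xrightarrow{\swarrow\cdot\tau}m_1$ and $n\xrightarrow{\searrow\cdot\tau}m_2$ (binding edges are never followed). The path $n\xrightarrow{\tau}$ crosses a node $m$ if either $n\xrightarrow{\tau}m$, or $\tau=d\cdot\tau'$ and $n\xrightarrow{\tau'}$ crosses $m$. A root is a node $r$ such that the only path ending in $r$ has the empty trace. A node $m$ dominates $n$ if every path from a root to $n$ crosses $m$. A $\lambda$-graph is a pre-$\lambda$-graph that has finitely many nodes, is acyclic ($n\xrightarrow{\tau}n$ holds only for $\tau=\epsilon$), and is dominated (every bound variable node $\mathrm{var}(l)$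 is dominated by its binder $l$). Two nodes are homogeneous if both are application nodes, or both abstraction nodes, or both free variable nodes, or both bound variable nodes; a binary relation $R$ on nodes is homogeneous if it only relates homogeneous nodes. Rules: $(\swarrow)$: $@(n_1,n_2)\,R\,@(m_1,m_2)$ implies $n_1\,R\,m_1$; $(\searrow)$: $@(n_1,n_2)\,R\,@(m_1,m_2)$ implies $n_2\,R\,m_2$; $(\downarrow)$: $\lambda(n)\,R\,\lambda(m)$ implies $n\,R\,m$; $(\circlearrowright)$: $\mathrm{var}(n)\,R\,\mathrm{var}(m)$ implies $n\,R\,m$. $R$ is propagated if closed under $(\swarrow),(\downarrow),(\searrow)$. A bisimulation is a homogeneous propagated relation closed also under $(\circlearrowright)$. $R^{\Downarrow}$ (propagation) is the smallest propagated relation containing $R$; $R^{\#}$ (spreading) is the smallest propagated equivalence relation containing $R$. A query over $G$ is a binary relation on the roots of $G$. *)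

theory Defs
  imports Main
begin

text \<open>Nodes of a (pre-)lambda-graph are the elements of the type 'n; the graph G
assigns to each node its kind and its outgoing edges. 'a is the set of atoms.\<close>

datatype ('n, 'a) node = App 'n 'n | Lam 'n | FVar 'a | BVar 'n

datatype dir = SW | Down | SE

text \<open>Traces are lists; d # tau is the trace tau extended by one final step d.\<close>

inductive path :: "('n \<Rightarrow> ('n, 'a) node) \<Rightarrow> 'n \<Rightarrow> dir list \<Rightarrow> 'n \<Rightarrow> bool"
  for G where
  path_nil: "path G n [] n"
| path_down: "path G n tau m \<Longrightarrow> G m = Lam m' \<Longrightarrow> path G n (Down # tau) m'"
| path_sw: "path G n tau m \<Longrightarrow> G m = App m1 m2 \<Longrightarrow> path G n (SW # tau) m1"
| path_se: "path G n tau m \<Longrightarrow> G m = App m1 m2 \<Longrightarrow> path G n (SE # tau) m2"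

fun crosses :: "('n \<Rightarrow> ('n, 'a) node) \<Rightarrow> 'n \<Rightarrow> dir list \<Rightarrow> 'n \<Rightarrow> bool" where
  "crosses G n [] m = path G n [] m"
| "crosses G n (d # tau) m = (path G n (d # tau) m \<or> crosses G n tau m)"

definition is_root :: "('n \<Rightarrow> ('n, 'a) node) \<Rightarrow> 'n \<Rightarrow> bool" where
  "is_root G r \<longleftrightarrow> (\<forall>n tau. path G n tau r \<longrightarrow> tau = [])"

definition dominates :: "('n \<Rightarrow> ('n, 'a) node) \<Rightarrow> 'n \<Rightarrow> 'n \<Rightarrow> bool" where
  "dominates G m n \<longleftrightarrow> (\<forall>r tau. is_root G r \<longrightarrow> path G r tau n \<longrightarrow> crosses G r tau m)"

definition pre_lambda_graph :: "('n \<Rightarrow> ('n, 'a) node) \<Rightarrow> bool" where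
  "pre_lambda_graph G \<longleftrightarrow>
     (\<forall>n l. G n = BVar l \<longrightarrow> (\<exists>b. G l = Lam b)) \<and>
     (\<forall>n m a. G n = FVar a \<longrightarrow> G m = FVar a \<longrightarrow> n = m)"

definition lambda_graph :: "('n \<Rightarrow> ('n, 'a) node) \<Rightarrow> bool" where
  "lambda_graph G \<longleftrightarrow> pre_lambda_graph G \<and> finite (UNIV :: 'n set) \<and>
     (\<forall>n tau. path G n tau n \<longrightarrow> tau = []) \<and>
     (\<forall>n l. G n = BVar l \<longrightarrow> dominates G l n)"

definition homogeneous_nodes :: "('n \<Rightarrow> ('n, 'a) node) \<Rightarrow> 'n \<Rightarrow> 'n \<Rightarrow> bool" where
  "homogeneous_nodes G n m \<longleftrightarrow>
     ((\<exists>a b c d. G n = App a b \<and> G m = App c d) \<or>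
      (\<exists>a b. G n = Lam a \<and> G m = Lam b) \<or>
      (\<exists>a b. G n = FVar a \<and> G m = FVar b) \<or>
      (\<exists>a b. G n = BVar a \<and> G m = BVar b))"

definition homogeneous :: "('n \<Rightarrow> ('n, 'a) node) \<Rightarrow> ('n \<times> 'n) set \<Rightarrow> bool" where
  "homogeneous G R \<longleftrightarrow> (\<forall>(n, m) \<in> R. homogeneous_nodes G n m)"

definition propagated :: "('n \<Rightarrow> ('n, 'a) node) \<Rightarrow> ('n \<times> 'n) set \<Rightarrow> bool" where
  "propagated G R \<longleftrightarrow>
     (\<forall>n m n1 n2 m1 m2. (n, m) \<in> R \<longrightarrow> G n = App n1 n2 \<longrightarrow> G m = App m1 m2 \<longrightarrow>
        (n1, m1) \<in> R \<and> (n2, m2) \<in> R) \<and>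
     (\<forall>n m n' m'. (n, m) \<in> R \<longrightarrow> G n = Lam n' \<longrightarrow> G m = Lam m' \<longrightarrow> (n', m') \<in> R)"

definition bisimulation :: "('n \<Rightarrow> ('n, 'a) node) \<Rightarrow> ('n \<times> 'n) set \<Rightarrow> bool" where
  "bisimulation G R \<longleftrightarrow> homogeneous G R \<and> propagated G R \<and>
     (\<forall>n m l k. (n, m) \<in> R \<longrightarrow> G n = BVar l \<longrightarrow> G m = BVar k \<longrightarrow> (l, k) \<in> R)"

text \<open>R^\<Down>: smallest propagated relation containing R.\<close>
definition propagation :: "('n \<Rightarrow> ('n, 'a) node) \<Rightarrow> ('n \<times> 'n) set \<Rightarrow> ('n \<times> 'n) set" where
  "propagation G R = \<Inter>{S. R \<subseteq> S \<and> propagated G S}"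

text \<open>R^#: smallest propagated equivalence relation (on the nodes) containing R.\<close>
definition spreading :: "('n \<Rightarrow> ('n, 'a) node) \<Rightarrow> ('n \<times> 'n) set \<Rightarrow> ('n \<times> 'n) set" where
  "spreading G R = \<Inter>{S. R \<subseteq> S \<and> propagated G S \<and> equiv UNIV S}"

definition query :: "('n \<Rightarrow> ('n, 'a) node) \<Rightarrow> ('n \<times> 'n) set \<Rightarrow> bool" where
  "query G Q \<longleftrightarrow> (\<forall>(r, s) \<in> Q. is_root G r \<and> is_root G s)"

end

(*
  Q\<^sup>\<Down> is the set of pairs of nodes reached from Q-related roots along a common trace.

  Bisimulations are closed under identity, converse, composition and unions, hence under
  equivalence closure. So if Q\<^sup>\<Down> is a bisimulation, its equivalence closure is a propagated
  equivalence containing Q; being contained in Q\<^sup># it equals Q\<^sup>#.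

  Conversely Q\<^sup>\<Down> \<subseteq> Q\<^sup># gives homogeneity. If n, m are reached from roots r, s by a common
  trace and bind to l, k, domination puts l and k on these paths, at suffix traces t and t'.
  Were t' = u t with u nonempty, following t from s would reach some x with (x, k) \<in> Q\<^sup># and
  x \<rightarrow>\<^sub>u k; simulating the path u along the homogeneous propagated relation Q\<^sup># then yields an
  infinite chain of proper descendants, impossible in a finite acyclic graph. So t = t' and
  (l, k) \<in> Q\<^sup>\<Down>.
*)

theory Submission
  imports Defs
begin

(* Bisimulations are the post-fixed points of the relator of the node datatype, with atoms
   unconstrained; the relator laws then give the closure properties below. *)
lemma bisimulation_iff_rel_node:
  "bisimulation G R \<longleftrightarrow> (\<forall>(x, y) \<in> R. rel_node (in_rel R) (in_rel UNIV) (G x) (G y))"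
proof -
  have children: "rel_node (in_rel R) (in_rel UNIV) (G x) (G y) \<longleftrightarrow> homogeneous_nodes G x y \<and>
     (\<forall>x1 x2 y1 y2. G x = App x1 x2 \<longrightarrow> G y = App y1 y2 \<longrightarrow> (x1, y1) \<in> R \<and> (x2, y2) \<in> R) \<and>
     (\<forall>x' y'. G x = Lam x' \<longrightarrow> G y = Lam y' \<longrightarrow> (x', y') \<in> R) \<and>
     (\<forall>l k. G x = BVar l \<longrightarrow> G y = BVar k \<longrightarrow> (l, k) \<in> R)" for x y
    unfolding homogeneous_nodes_def by (cases "G x"; cases "G y") auto
  show ?thesis
  proof
    assume "bisimulation G R"
    then show "\<forall>(x, y) \<in> R. rel_node (in_rel R) (in_rel UNIV) (G x) (G y)"
      unfolding children bisimulation_def homogeneous_def propagated_def by blast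
  next
    assume "\<forall>(x, y) \<in> R. rel_node (in_rel R) (in_rel UNIV) (G x) (G y)"
    then show "bisimulation G R"
      unfolding children bisimulation_def homogeneous_def propagated_def by fast
  qed
qed

lemma bisimulation_Id: "bisimulation G Id"
  unfolding bisimulation_iff_rel_node
proof clarify
  fix x show "rel_node (in_rel Id) (in_rel UNIV) (G x) (G x)"
    by (cases "G x") auto
qed

lemma bisimulation_converse:
  assumes "bisimulation G R"
  shows "bisimulation G (R\<inverse>)"
  unfolding bisimulation_iff_rel_node
proof clarify
  fix x y assume "(y, x) \<in> R"
  with assms have "rel_node (in_rel R) (in_rel UNIV) (G y) (G x)"
    unfolding bisimulation_iff_rel_node by blast
  then have "rel_node (in_rel R)\<inverse>\<inverse> (in_rel UNIV)\<inverse>\<inverse> (G x) (G y)"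
    unfolding node.rel_flip .
  then show "rel_node (in_rel (R\<inverse>)) (in_rel UNIV) (G x) (G y)"
    unfolding conversep_in_rel converse_UNIV .
qed

lemma UNIV_relcomp_UNIV: "UNIV O UNIV = UNIV"
  by auto

lemma bisimulation_relcomp:
  fixes G :: "'n \<Rightarrow> ('n, 'a) node"
  assumes "bisimulation G R" and "bisimulation G S"
  shows "bisimulation G (R O S)"
  unfolding bisimulation_iff_rel_node
proof clarify
  fix x y z assume "(x, y) \<in> R" "(y, z) \<in> S"
  with assms have "rel_node (in_rel R) (in_rel UNIV) (G x) (G y)"
    "rel_node (in_rel S) (in_rel UNIV) (G y) (G z)"
    unfolding bisimulation_iff_rel_node by blast+
  then have "rel_node (in_rel R OO in_rel S) (in_rel UNIV OO in_rel (UNIV :: ('a \<times> 'a) set)) (G x) (G z)"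
    unfolding node.rel_compp by (rule relcomppI)
  then show "rel_node (in_rel (R O S)) (in_rel UNIV) (G x) (G z)"
    unfolding relcompp_in_rel UNIV_relcomp_UNIV .
qed

lemma bisimulation_Union:
  assumes "\<And>R. R \<in> \<R> \<Longrightarrow> bisimulation G R"
  shows "bisimulation G (\<Union>\<R>)"
  unfolding bisimulation_iff_rel_node
proof clarify
  fix R x y assume "R \<in> \<R>" "(x, y) \<in> R"
  with assms have related: "rel_node (in_rel R) (in_rel UNIV) (G x) (G y)"
    unfolding bisimulation_iff_rel_node by blast
  have "in_rel R \<le> in_rel (\<Union>\<R>)"
    using \<open>R \<in> \<R>\<close> by auto
  then have "rel_node (in_rel R) (in_rel UNIV) \<le> rel_node (in_rel (\<Union>\<R>)) (in_rel UNIV)"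
    by (rule node.rel_mono) (rule order_refl)
  then show "rel_node (in_rel (\<Union>\<R>)) (in_rel UNIV) (G x) (G y)"
    using related by (rule predicate2D)
qed

lemma bisimulation_rtrancl:
  assumes "bisimulation G R"
  shows "bisimulation G (R\<^sup>*)"
proof -
  have "bisimulation G (R ^^ n)" for n
    by (induction n) (simp_all add: bisimulation_Id bisimulation_relcomp assms)
  then show ?thesis
    unfolding rtrancl_is_UN_relpow by (auto intro: bisimulation_Union)
qed

lemma bisimulation_equiv_closure:
  assumes "bisimulation G R"
  shows "bisimulation G ((R \<union> R\<inverse>)\<^sup>*)"
proof -
  have "bisimulation G (\<Union>{R, R\<inverse>})"
    by (rule bisimulation_Union) (auto intro: assms bisimulation_converse)
  then show ?thesis
    by (simp add: bisimulation_rtrancl)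
qed

lemma path_append: "path G b t2 c \<Longrightarrow> path G a t1 b \<Longrightarrow> path G a (t2 @ t1) c"
  by (induction rule: path.induct) (auto intro: path.intros)

lemma path_appendD: "path G a (t2 @ t1) c \<Longrightarrow> \<exists>b. path G a t1 b \<and> path G b t2 c"
proof (induction t2 arbitrary: c)
  case Nil
  then show ?case by (auto intro: path.intros)
next
  case (Cons d t2)
  from Cons.prems show ?case
    by (cases rule: path.cases) (force dest: Cons.IH intro: path.intros)+
qed

lemma crosses_path_suffix: "crosses G r t l \<Longrightarrow> \<exists>t0 t1. t = t0 @ t1 \<and> path G r t1 l"
proof (induction t)
  case Nil
  then show ?case by auto
next
  case (Cons d t)
  show ?case
  proof (cases "path G r (d # t) l")
    case True
    then show ?thesis by (metis append_Nil)
  next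
    case False
    with Cons show ?thesis by (metis append_Cons crosses.simps(2))
  qed
qed

lemma propagated_common_trace:
  assumes "propagated G S"
  shows "path G r t n \<Longrightarrow> path G s t m \<Longrightarrow> (r, s) \<in> S \<Longrightarrow> (n, m) \<in> S"
proof (induction arbitrary: m rule: path.induct)
  case (path_nil n)
  then show ?case by (cases rule: path.cases) auto
next
  case (path_down n tau x x')
  from path_down.prems(1) obtain y where "path G s tau y" "G y = Lam m"
    by (cases rule: path.cases) auto
  with path_down assms show ?case
    unfolding propagated_def by blast
next
  case (path_sw n tau x x1 x2)
  from path_sw.prems(1) obtain y y2 where "path G s tau y" "G y = App m y2"
    by (cases rule: path.cases) auto
  with path_sw assms show ?case
    unfolding propagated_def by blast
next
  case (path_se n tau x x1 x2)
  from path_se.prems(1) obtain y y1 where "path G s tau y" "G y = App y1 m"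
    by (cases rule: path.cases) auto
  with path_se assms show ?case
    unfolding propagated_def by blast
qed

lemma propagated_path_simulation:
  assumes homS: "homogeneous G S" and propS: "propagated G S"
  shows "path G a t x \<Longrightarrow> (a, b) \<in> S \<Longrightarrow> \<exists>y. path G b t y \<and> (x, y) \<in> S"
proof (induction rule: path.induct)
  case (path_nil n)
  then show ?case by (blast intro: path.path_nil)
next
  case (path_down n tau m m')
  then obtain y where y: "path G b tau y" "(m, y) \<in> S" by blast
  from homS y(2) have "homogeneous_nodes G m y"
    unfolding homogeneous_def by blast
  with path_down.hyps(2) obtain y' where "G y = Lam y'"
    unfolding homogeneous_nodes_def by auto
  with y propS path_down.hyps(2) show ?case
    unfolding propagated_def by (blast intro: path.path_down)
next
  case (path_sw n tau m m1 m2)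
  then obtain y where y: "path G b tau y" "(m, y) \<in> S" by blast
  from homS y(2) have "homogeneous_nodes G m y"
    unfolding homogeneous_def by blast
  with path_sw.hyps(2) obtain y1 y2 where "G y = App y1 y2"
    unfolding homogeneous_nodes_def by auto
  with y propS path_sw.hyps(2) show ?case
    unfolding propagated_def by (blast intro: path.path_sw)
next
  case (path_se n tau m m1 m2)
  then obtain y where y: "path G b tau y" "(m, y) \<in> S" by blast
  from homS y(2) have "homogeneous_nodes G m y"
    unfolding homogeneous_def by blast
  with path_se.hyps(2) obtain y1 y2 where "G y = App y1 y2"
    unfolding homogeneous_nodes_def by auto
  with y propS path_se.hyps(2) show ?case
    unfolding propagated_def by (blast intro: path.path_se)
qed

lemma lambda_graphD:
  assumes "lambda_graph (G :: 'n \<Rightarrow> ('n, 'a) node)"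
  shows "finite (UNIV :: 'n set)" and "path G n t n \<Longrightarrow> t = []"
    and "G n = BVar l \<Longrightarrow> dominates G l n"
  using assms unfolding lambda_graph_def by blast+

lemma wf_proper_descendant:
  assumes "finite (UNIV :: 'n set)" and "\<And>n t. path G n t n \<Longrightarrow> t = []"
  shows "wf {(y, x :: 'n). \<exists>t. t \<noteq> [] \<and> path G x t y}" (is "wf ?D")
proof (rule finite_acyclic_wf)
  have "finite (UNIV \<times> UNIV :: ('n \<times> 'n) set)"
    using finite_cartesian_product[OF assms(1) assms(1)] .
  then show "finite ?D"
    by (rule finite_subset[rotated]) simp
  have "trans ?D"
  proof (rule transI)
    fix x y z assume "(x, y) \<in> ?D" "(y, z) \<in> ?D"
    then obtain t t' where "t \<noteq> []" "path G y t x" "path G z t' y" by blast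
    then have "path G z (t @ t') x" by (blast intro: path_append)
    with \<open>t \<noteq> []\<close> show "(x, z) \<in> ?D" by blast
  qed
  then show "acyclic ?D"
    unfolding acyclic_def using assms(2) by auto
qed

lemma related_path_Nil:
  assumes "lambda_graph G" and "homogeneous G S" and "propagated G S"
    and "(a, b) \<in> S" and "path G a t b"
  shows "t = []"
proof (rule ccontr)
  assume "t \<noteq> []"
  have "wf {(y, x). \<exists>t. t \<noteq> [] \<and> path G x t y}"
    using wf_proper_descendant[OF lambda_graphD(1)[OF assms(1)] lambda_graphD(2)[OF assms(1)]] .
  then have "\<forall>b. (a, b) \<in> S \<longrightarrow> \<not> path G a t b"
  proof (induction a rule: wf_induct_rule)
    case (less a)
    show ?case
    proof (intro allI impI notI)
      fix b assume "(a, b) \<in> S" "path G a t b"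
      then obtain c where "path G b t c" "(b, c) \<in> S"
        using propagated_path_simulation[OF assms(2,3)] by blast
      moreover have "(b, a) \<in> {(y, x). \<exists>t. t \<noteq> [] \<and> path G x t y}"
        using \<open>path G a t b\<close> \<open>t \<noteq> []\<close> by blast
      ultimately show False
        using less by simp
    qed
  qed
  with assms(4,5) show False by blast
qed

definition trace_pairs :: "('n \<Rightarrow> ('n, 'a) node) \<Rightarrow> ('n \<times> 'n) set \<Rightarrow> ('n \<times> 'n) set" where
  "trace_pairs G Q = {(n, m). \<exists>(r, s) \<in> Q. \<exists>t. path G r t n \<and> path G s t m}"

lemma propagated_trace_pairs: "propagated G (trace_pairs G Q)"
  unfolding propagated_def trace_pairs_def by (blast intro: path.intros)

lemma propagation_eq_trace_pairs: "propagation G Q = trace_pairs G Q"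
proof
  have "Q \<subseteq> trace_pairs G Q"
    unfolding trace_pairs_def by (blast intro: path.path_nil)
  then show "propagation G Q \<subseteq> trace_pairs G Q"
    unfolding propagation_def using propagated_trace_pairs by blast
  show "trace_pairs G Q \<subseteq> propagation G Q"
    unfolding propagation_def trace_pairs_def by (blast intro: propagated_common_trace)
qed

lemma propagated_Inter: "(\<And>S. S \<in> \<S> \<Longrightarrow> propagated G S) \<Longrightarrow> propagated G (\<Inter>\<S>)"
  unfolding propagated_def by blast

lemma equiv_UNIV_Inter:
  assumes "\<And>S. S \<in> \<S> \<Longrightarrow> equiv UNIV S"
  shows "equiv UNIV (\<Inter>\<S>)"
proof (rule equivI)
  show "\<Inter>\<S> \<subseteq> UNIV \<times> UNIV"
    by simp
  show "refl (\<Inter>\<S>)"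
    using assms by (auto simp: equiv_def refl_on_def)
  show "sym (\<Inter>\<S>)"
    using assms by (auto simp: equiv_def sym_def)
  show "trans (\<Inter>\<S>)"
    using assms unfolding equiv_def trans_def by blast
qed

lemma subset_spreading: "Q \<subseteq> spreading G Q"
  unfolding spreading_def by blast

lemma propagated_spreading: "propagated G (spreading G Q)"
  unfolding spreading_def by (rule propagated_Inter) blast

lemma equiv_spreading: "equiv UNIV (spreading G Q)"
  unfolding spreading_def by (rule equiv_UNIV_Inter) blast

lemma spreading_least: "Q \<subseteq> S \<Longrightarrow> propagated G S \<Longrightarrow> equiv UNIV S \<Longrightarrow> spreading G Q \<subseteq> S"
  unfolding spreading_def by blast

lemma propagation_subset_spreading: "propagation G Q \<subseteq> spreading G Q"
  unfolding propagation_def using subset_spreading propagated_spreading by blast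

lemma equiv_closure_subset:
  assumes "equiv UNIV S" and "R \<subseteq> S"
  shows "(R \<union> R\<inverse>)\<^sup>* \<subseteq> S"
proof -
  have "R \<union> R\<inverse> \<subseteq> S"
    using assms unfolding equiv_def sym_def by blast
  then have "(R \<union> R\<inverse>)\<^sup>* \<subseteq> S\<^sup>*"
    by (rule rtrancl_mono)
  also have "\<dots> = (S\<^sup>+)\<^sup>="
    by (rule rtrancl_trancl_reflcl)
  also have "\<dots> = S"
    using assms(1) unfolding equiv_def refl_on_def by auto
  finally show ?thesis .
qed

lemma equiv_equiv_closure: "equiv UNIV ((R \<union> R\<inverse>)\<^sup>*)"
  by (rule equivI) (simp_all add: refl_rtrancl sym_rtrancl sym_Un_converse trans_rtrancl)

lemma spreading_eq_equiv_closure: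
  assumes "propagated G ((propagation G Q \<union> (propagation G Q)\<inverse>)\<^sup>*)"
  shows "spreading G Q = (propagation G Q \<union> (propagation G Q)\<inverse>)\<^sup>*"
proof
  have "Q \<subseteq> propagation G Q"
    unfolding propagation_def by blast
  then have "Q \<subseteq> (propagation G Q \<union> (propagation G Q)\<inverse>)\<^sup>*"
    by blast
  then show "spreading G Q \<subseteq> (propagation G Q \<union> (propagation G Q)\<inverse>)\<^sup>*"
    using assms equiv_equiv_closure by (rule spreading_least)
  show "(propagation G Q \<union> (propagation G Q)\<inverse>)\<^sup>* \<subseteq> spreading G Q"
    using equiv_spreading propagation_subset_spreading by (rule equiv_closure_subset)
qed

lemma bisimulation_spreading_if_propagation:
  assumes "bisimulation G (propagation G Q)"
  shows "bisimulation G (spreading G Q)"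
proof -
  have "bisimulation G ((propagation G Q \<union> (propagation G Q)\<inverse>)\<^sup>*)"
    using assms by (rule bisimulation_equiv_closure)
  moreover from this have "propagated G ((propagation G Q \<union> (propagation G Q)\<inverse>)\<^sup>*)"
    unfolding bisimulation_def by blast
  then have "spreading G Q = (propagation G Q \<union> (propagation G Q)\<inverse>)\<^sup>*"
    by (rule spreading_eq_equiv_closure)
  ultimately show ?thesis
    by simp
qed

lemma binder_on_root_path:
  assumes "lambda_graph G" and "is_root G r" and "path G r t n" and "G n = BVar l"
  obtains t0 t1 where "t = t0 @ t1" and "path G r t1 l"
proof -
  have "dominates G l n"
    using lambda_graphD(3)[OF assms(1,4)] .
  with assms(2,3) have "crosses G r t l"
    unfolding dominates_def by blast
  from crosses_path_suffix[OF this] obtain t0 t1 where "t = t0 @ t1" and "path G r t1 l"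
    by blast
  then show ?thesis
    by (rule that)
qed

lemma related_binders_no_extension:
  assumes "lambda_graph G" and "homogeneous G S" and "propagated G S" and "equiv UNIV S"
    and "(r, s) \<in> S" and "path G r t l" and "path G s (u @ t) k" and "(l, k) \<in> S"
  shows "u = []"
proof -
  obtain x where "path G s t x" and "path G x u k"
    using path_appendD[OF assms(7)] by blast
  have "(l, x) \<in> S"
    using propagated_common_trace[OF assms(3,6) \<open>path G s t x\<close> assms(5)] .
  with assms(4,8) have "(x, k) \<in> S"
    unfolding equiv_def sym_def trans_def by blast
  with assms(1-3) \<open>path G x u k\<close> show "u = []"
    by (blast intro: related_path_Nil)
qed

lemma related_binders_same_suffix:
  assumes "lambda_graph G" and "homogeneous G S" and "propagated G S" and "equiv UNIV S"
    and "(r, s) \<in> S" and "path G r t l" and "path G s t' k" and "(l, k) \<in> S"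
    and "t0 @ t = t0' @ t'"
  shows "t = t'"
proof -
  obtain u where "t' = u @ t \<or> t = u @ t'"
    using assms(9) append_eq_append_conv2[of t0 t t0' t'] by auto
  moreover have "u = []"
    using calculation
  proof
    assume "t' = u @ t"
    with assms show "u = []"
      by (blast intro: related_binders_no_extension)
  next
    assume "t = u @ t'"
    moreover have "(s, r) \<in> S" and "(k, l) \<in> S"
      using assms(4,5,8) unfolding equiv_def sym_def by blast+
    ultimately show "u = []"
      using assms(1-4,6,7) by (blast intro: related_binders_no_extension)
  qed
  ultimately show ?thesis
    by auto
qed

lemma propagation_binders:
  assumes G: "lambda_graph G" and "query G Q" and bisim: "bisimulation G (spreading G Q)"
    and nm: "(n, m) \<in> propagation G Q" and n: "G n = BVar l" and m: "G m = BVar k"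
  shows "(l, k) \<in> propagation G Q"
proof -
  obtain r s t where "(r, s) \<in> Q" and r: "path G r t n" and s: "path G s t m"
    using nm unfolding propagation_eq_trace_pairs trace_pairs_def by blast
  with \<open>query G Q\<close> have "is_root G r" and "is_root G s"
    unfolding query_def by auto
  obtain t0 t1 where "t = t0 @ t1" and l: "path G r t1 l"
    using binder_on_root_path[OF G \<open>is_root G r\<close> r n] .
  obtain t0' t1' where "t = t0' @ t1'" and k: "path G s t1' k"
    using binder_on_root_path[OF G \<open>is_root G s\<close> s m] .
  have "(r, s) \<in> spreading G Q"
    using \<open>(r, s) \<in> Q\<close> subset_spreading by blast
  moreover have "(l, k) \<in> spreading G Q"
    using nm n m bisim propagation_subset_spreading unfolding bisimulation_def by blast
  moreover have "homogeneous G (spreading G Q)" and "propagated G (spreading G Q)"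
    using bisim unfolding bisimulation_def by auto
  ultimately have "t1 = t1'"
    using related_binders_same_suffix[OF G _ _ equiv_spreading _ l k]
      \<open>t = t0 @ t1\<close> \<open>t = t0' @ t1'\<close> by blast
  with \<open>(r, s) \<in> Q\<close> l k show ?thesis
    unfolding propagation_eq_trace_pairs trace_pairs_def by blast
qed

lemma bisimulation_propagation_if_spreading:
  assumes "lambda_graph G" and "query G Q" and bisim: "bisimulation G (spreading G Q)"
  shows "bisimulation G (propagation G Q)"
proof -
  have "homogeneous G (propagation G Q)"
    using bisim propagation_subset_spreading unfolding bisimulation_def homogeneous_def by blast
  moreover have "propagated G (propagation G Q)"
    unfolding propagation_eq_trace_pairs by (rule propagated_trace_pairs)
  ultimately show ?thesis
    unfolding bisimulation_def using propagation_binders[OF assms] by blast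
qed

theorem mainTheorem13:
  fixes G :: "'n \<Rightarrow> ('n, 'a) node" and Q :: "('n \<times> 'n) set"
  assumes "lambda_graph G" and "query G Q"
  shows "bisimulation G (propagation G Q) \<longleftrightarrow> bisimulation G (spreading G Q)"
  using bisimulation_spreading_if_propagation bisimulation_propagation_if_spreading[OF assms]
  by blast

end
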